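(* Let $\Gamma,P,\mu$ be real numbers with $0\le\Gamma<1$ and $0\le P\le1$, and set \[ B_G^{(2)}:=[-4\Gamma P+2P-2\Gamma+3]+\mu[3-2\Gamma-4P]. \] (i) If $-1/3<\mu<0$ and $|2\Gamma-1|\le\min\{1,(1-P)/P\}$, then $B_G^{(2)}>0$. (ii) If $\mu=0$ and $|2\Gamma-1|<\min\{1,(1-P)/P\}$, then $B_G^{(2)}>0$. Here $(1-P)/P$ is interpreted as $+\infty$ when $P=0$.
   Context: In the application, $\Gamma=\Gamma(k)\in[0,1]$ is the fraction of the potential enstrophy spectrum at wavenumber $k$ contained in the upper layer, $P=P(k)\in[0,1]$ is the fraction of the energy spectrum at $k$ that is baroclinic, and $\mu$ is the Ekman extrapolation parameter; $B_G^{(2)}$ is a coefficient in the potential enstrophy dissipation rate spectrum of the asymmetric Ekman term. *)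

theory Defs
  imports Complex_Main "HOL-Library.Extended_Real"
begin

definition BG2 :: "real \<Rightarrow> real \<Rightarrow> real \<Rightarrow> real" where
  "BG2 \<Gamma> P \<mu> = (-4*\<Gamma>*P + 2*P - 2*\<Gamma> + 3) + \<mu> * (3 - 2*\<Gamma> - 4*P)"

definition ratio_bound :: "real \<Rightarrow> ereal" where
  "ratio_bound P = (if P = 0 then \<infinity> else ereal ((1 - P) / P))"

end

theory Submission
  imports Defs
begin

text \<open>Writing \<open>X = 3 - 2\<Gamma> + 2P - 4\<Gamma>P\<close> for the first bracket of \<open>BG2\<close>, one has
  \<open>BG2 \<Gamma> P \<mu> = (1 + \<mu>) X - 2\<mu>P(3 - 2\<Gamma>)\<close>, so for \<open>-1 < \<mu> \<le> 0\<close> it suffices that \<open>X > 0\<close>.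
  The hypothesis on \<open>\<bar>2\<Gamma> - 1\<bar>\<close> enters only through its consequence \<open>2\<Gamma>P \<le> 1\<close>,
  and \<open>X > 0\<close> follows from \<open>\<Gamma> < 1\<close> and \<open>2\<Gamma>P \<le> 1\<close>: for \<open>P \<le> 1/2\<close> the term
  \<open>2P(2\<Gamma> - 1)\<close> is at most \<open>max 0 (2\<Gamma> - 1) < 1\<close>, for \<open>P > 1/2\<close> the term \<open>4\<Gamma>P\<close> is at most 2.
  Hence both parts hold for every \<open>-1 < \<mu> \<le> 0\<close>, already under the non-strict hypothesis.\<close>

lemma ereal_le_ratio_bound_iff:
  assumes "0 \<le> P"
  shows "ereal x \<le> ratio_bound P \<longleftrightarrow> x * P \<le> 1 - P"
  using assms by (cases "P = 0") (auto simp: ratio_bound_def field_simps)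

lemma double_mult_le_one_if_ereal_abs_le_ratio_bound:
  fixes \<Gamma> P :: real
  assumes "0 \<le> P" and "ereal \<bar>2*\<Gamma> - 1\<bar> \<le> ratio_bound P"
  shows "2*\<Gamma>*P \<le> 1"
proof -
  have "\<bar>2*\<Gamma> - 1\<bar> * P \<le> 1 - P"
    using assms ereal_le_ratio_bound_iff by blast
  moreover have "(2*\<Gamma> - 1) * P \<le> \<bar>2*\<Gamma> - 1\<bar> * P"
    using assms(1) by (simp add: mult_right_mono)
  ultimately show ?thesis
    by (simp add: algebra_simps)
qed

lemma BG2_eq:
  "BG2 \<Gamma> P \<mu> = (1 + \<mu>) * (3 - 2*\<Gamma> + 2*P - 4*\<Gamma>*P) - 2*\<mu>*P*(3 - 2*\<Gamma>)"
  by (simp add: BG2_def algebra_simps)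

lemma BG2_bracket_pos:
  fixes \<Gamma> P :: real
  assumes "\<Gamma> < 1" and "0 \<le> P" and "2*\<Gamma>*P \<le> 1"
  shows "0 < 3 - 2*\<Gamma> + 2*P - 4*\<Gamma>*P"
proof (cases "P \<le> 1/2")
  case True
  have "2*P*(2*\<Gamma> - 1) \<le> max 0 (2*\<Gamma> - 1)"
  proof (cases "2*\<Gamma> - 1 \<le> 0")
    case True
    then show ?thesis
      using \<open>0 \<le> P\<close> by (simp add: mult_nonneg_nonpos)
  next
    case False
    then show ?thesis
      using \<open>P \<le> 1/2\<close> mult_right_mono[of "2*P" 1 "2*\<Gamma> - 1"] by simp
  qed
  then show ?thesis
    using \<open>\<Gamma> < 1\<close> by (simp add: algebra_simps)
next
  case False
  then show ?thesis
    using assms by simp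
qed

lemma BG2_pos:
  fixes \<Gamma> P \<mu> :: real
  assumes "\<Gamma> < 1" and "0 \<le> P" and "2*\<Gamma>*P \<le> 1" and "-1 < \<mu>" and "\<mu> \<le> 0"
  shows "0 < BG2 \<Gamma> P \<mu>"
proof -
  have "0 < (1 + \<mu>) * (3 - 2*\<Gamma> + 2*P - 4*\<Gamma>*P)"
    using BG2_bracket_pos[OF assms(1-3)] \<open>-1 < \<mu>\<close> by simp
  moreover have "0 \<le> -\<mu> * (2*P*(3 - 2*\<Gamma>))"
    using assms by (intro mult_nonneg_nonneg) auto
  ultimately show ?thesis
    unfolding BG2_eq by (simp add: algebra_simps)
qed

theorem proposition5:
  fixes \<Gamma> P \<mu> :: real
  assumes "0 \<le> \<Gamma>" and "\<Gamma> < 1" and "0 \<le> P" and "P \<le> 1"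
  shows "(-1/3 < \<mu> \<and> \<mu> < 0 \<and> ereal \<bar>2*\<Gamma> - 1\<bar> \<le> min 1 (ratio_bound P) \<longrightarrow> BG2 \<Gamma> P \<mu> > 0)
       \<and> (\<mu> = 0 \<and> ereal \<bar>2*\<Gamma> - 1\<bar> < min 1 (ratio_bound P) \<longrightarrow> BG2 \<Gamma> P \<mu> > 0)"
proof -
  have "BG2 \<Gamma> P \<mu> > 0"
    if "-1 < \<mu>" "\<mu> \<le> 0" "ereal \<bar>2*\<Gamma> - 1\<bar> \<le> min 1 (ratio_bound P)"
    using that assms BG2_pos double_mult_le_one_if_ereal_abs_le_ratio_bound by simp
  then show ?thesis
    by force
qed

end
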